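(* For $n\geq 3$, the group $\Gamma_2(VP_n)/\Gamma_3(VP_n)$ is a free abelian group of rank $n(n-1)(2n-3)/2$.
   Context: The virtual pure braid group $VP_n$ is the group with generators $\lambda_{k,l}$, $1\le k\neq l\le n$, and defining relations $\lambda_{i,j}\lambda_{k,l}=\lambda_{k,l}\lambda_{i,j}$ and $\lambda_{k,i}\lambda_{k,j}\lambda_{i,j}=\lambda_{i,j}\lambda_{k,j}\lambda_{k,i}$, where distinct letters stand for distinct indices. (Equivalently, it is the kernel of the homomorphism from the virtual braid group $VB_n$ to $S_n$ sending both $\sigma_i$ and $\rho_i$ to the transposition $(i\ i{+}1)$.) For a group $G$, $\Gamma_1(G)=G$, $\Gamma_i(G)=[\Gamma_{i-1}(G),G]$. *)

theory Defs
  imports "HOL-Algebra.Algebra"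
begin

text \<open>Words in the generators lambda_{k,l}: a letter is ((k,l), b) where b = True
  stands for lambda_{k,l} and b = False for its inverse.\<close>

type_synonym vp_letter = "(nat \<times> nat) \<times> bool"

definition vp_gen :: "nat \<Rightarrow> nat \<times> nat \<Rightarrow> bool" where
  "vp_gen n g \<longleftrightarrow> 1 \<le> fst g \<and> fst g \<le> n \<and> 1 \<le> snd g \<and> snd g \<le> n \<and> fst g \<noteq> snd g"

definition vp_word :: "nat \<Rightarrow> vp_letter list \<Rightarrow> bool" where
  "vp_word n w \<longleftrightarrow> (\<forall>x \<in> set w. vp_gen n (fst x))"

definition vp_relator :: "nat \<Rightarrow> vp_letter list \<Rightarrow> bool" where
  "vp_relator n r \<longleftrightarrow>
    (\<exists>i j k l. distinct [i, j, k, l] \<and> {i, j, k, l} \<subseteq> {1..n} \<and>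
       r = [((i,j),True), ((k,l),True), ((i,j),False), ((k,l),False)]) \<or>
    (\<exists>i j k. distinct [i, j, k] \<and> {i, j, k} \<subseteq> {1..n} \<and>
       r = [((k,i),True), ((k,j),True), ((i,j),True),
            ((k,i),False), ((k,j),False), ((i,j),False)])"

inductive vp_rel :: "nat \<Rightarrow> vp_letter list \<Rightarrow> vp_letter list \<Rightarrow> bool" for n where
  refl: "vp_rel n w w"
| sym: "vp_rel n u v \<Longrightarrow> vp_rel n v u"
| trans: "vp_rel n u v \<Longrightarrow> vp_rel n v w \<Longrightarrow> vp_rel n u w"
| cancel: "vp_gen n g \<Longrightarrow> vp_rel n (u @ [(g, b), (g, \<not> b)] @ v) (u @ v)"
| relator: "vp_relator n r \<Longrightarrow> vp_rel n (u @ r @ v) (u @ v)"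

definition vp_equiv :: "nat \<Rightarrow> (vp_letter list \<times> vp_letter list) set" where
  "vp_equiv n = {(x, y). vp_word n x \<and> vp_word n y \<and> vp_rel n x y}"

definition VP :: "nat \<Rightarrow> vp_letter list set monoid" where
  "VP n = \<lparr> carrier = {w. vp_word n w} // vp_equiv n,
            monoid.mult = (\<lambda>A B. vp_equiv n `` {x @ y | x y. x \<in> A \<and> y \<in> B}),
            one = vp_equiv n `` {[]} \<rparr>"

text \<open>Lower central series: Gamma_1 = G, Gamma_(i+1) = [Gamma_i, G]
  (Gamma_0 is also set to G, which is irrelevant).\<close>
fun lower_central :: "('a, 'b) monoid_scheme \<Rightarrow> nat \<Rightarrow> 'a set" where
  "lower_central G 0 = carrier G"
| "lower_central G (Suc i) =
     (if i = 0 then carrier G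
      else generate G {inv\<^bsub>G\<^esub> x \<otimes>\<^bsub>G\<^esub> inv\<^bsub>G\<^esub> y \<otimes>\<^bsub>G\<^esub> x \<otimes>\<^bsub>G\<^esub> y
                       | x y. x \<in> lower_central G i \<and> y \<in> carrier G})"

end

(*
  Send each generator lambda_a of VP_n to (e_a, 0) in the group Z^gen x Z^basis with product
  (x, s)(y, t) = (x + y, s + t + beta x y), where beta x y = sum over a < b of x_a y_b w(a, b).
  Here the basis consists of the commutators [lambda_a, lambda_b] of adjacent generators a < b
  (sharing their first index, their second index, or transposed), and w(a, b) is what the defining
  relations force [lambda_a, lambda_b] to be modulo Gamma_3 in that basis. The defining relations
  of VP_n hold in this group, and on Gamma_2 its second coordinate is an additive map onto the free
  abelian group on the basis that kills Gamma_3 and sends basic commutators to basis vectors.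
  Conversely, the commutator of two generators is basic, trivial (disjoint indices), or by the
  braid relation a combination of basic ones, so the basic commutators generate Gamma_2 modulo
  Gamma_3. Hence Gamma_2/Gamma_3 is free abelian on the basis. Every generator is adjacent to
  exactly 2n - 3 others, so the basis has n(n - 1)(2n - 3)/2 elements.
*)
theory Submission
  imports Defs "HOL-Library.Function_Algebras" "HOL-Library.Product_Lexorder"
    "HOL-Library.Indicator_Function"
begin

section \<open>Commutators and the lower central series\<close>

definition commutator :: "('a, 'b) monoid_scheme \<Rightarrow> 'a \<Rightarrow> 'a \<Rightarrow> 'a" where
  "commutator G x y = inv\<^bsub>G\<^esub> x \<otimes>\<^bsub>G\<^esub> inv\<^bsub>G\<^esub> y \<otimes>\<^bsub>G\<^esub> x \<otimes>\<^bsub>G\<^esub> y"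

lemma lower_central_Suc:
  "0 < i \<Longrightarrow> lower_central G (Suc i) =
     generate G {commutator G x y | x y. x \<in> lower_central G i \<and> y \<in> carrier G}"
  by (simp add: commutator_def)

lemma lower_central_2:
  "lower_central G 2 = generate G {commutator G x y | x y. x \<in> carrier G \<and> y \<in> carrier G}"
  by (simp add: numeral_2_eq_2 commutator_def)

lemma lower_central_3:
  "lower_central G 3 = generate G {commutator G x y | x y. x \<in> lower_central G 2 \<and> y \<in> carrier G}"
  by (simp add: numeral_3_eq_3 numeral_2_eq_2 commutator_def)

context group
begin

lemma inv_mult_cancel_left [simp]: "x \<in> carrier G \<Longrightarrow> y \<in> carrier G \<Longrightarrow> inv x \<otimes> (x \<otimes> y) = y"
  by (simp add: m_assoc[symmetric])

lemma mult_inv_cancel_left [simp]: "x \<in> carrier G \<Longrightarrow> y \<in> carrier G \<Longrightarrow> x \<otimes> (inv x \<otimes> y) = y"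
  by (simp add: m_assoc[symmetric])

lemma commutator_closed [simp]:
  "x \<in> carrier G \<Longrightarrow> y \<in> carrier G \<Longrightarrow> commutator G x y \<in> carrier G"
  by (simp add: commutator_def)

lemma commutator_swap:
  "x \<in> carrier G \<Longrightarrow> y \<in> carrier G \<Longrightarrow> commutator G y x = inv (commutator G x y)"
  by (simp add: commutator_def m_assoc inv_mult_group)

lemma commutator_eq_one_iff:
  "x \<in> carrier G \<Longrightarrow> y \<in> carrier G \<Longrightarrow> commutator G x y = \<one> \<longleftrightarrow> x \<otimes> y = y \<otimes> x"
proof -
  assume xy: "x \<in> carrier G" "y \<in> carrier G"
  then have "commutator G x y = inv (y \<otimes> x) \<otimes> (x \<otimes> y)"
    by (simp add: commutator_def m_assoc inv_mult_group)
  with xy show ?thesis by (simp add: inv_solve_left')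
qed

lemma lower_central_subgroup: "subgroup (lower_central G i) G"
proof (induction i)
  case (Suc i)
  then show ?case
    by (cases "i = 0")
      (auto simp: lower_central_Suc subgroup_self intro!: generate_is_subgroup
        dest: subgroup.mem_carrier)
qed (simp add: subgroup_self)

lemma lower_central_subset_carrier: "lower_central G i \<subseteq> carrier G"
  using lower_central_subgroup by (rule subgroup.subset)

lemma commutator_in_lower_central_2:
  "x \<in> carrier G \<Longrightarrow> y \<in> carrier G \<Longrightarrow> commutator G x y \<in> lower_central G 2"
  unfolding lower_central_2 by (blast intro: generate.incl)

lemma commutator_in_lower_central_3:
  "x \<in> lower_central G 2 \<Longrightarrow> y \<in> carrier G \<Longrightarrow> commutator G x y \<in> lower_central G 3"
  unfolding lower_central_3 by (blast intro: generate.incl)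

lemma lower_central_3_subset_2: "lower_central G 3 \<subseteq> lower_central G 2"
  unfolding lower_central_3 using lower_central_subset_carrier
  by (intro generate_subgroup_incl lower_central_subgroup)
    (blast intro: commutator_in_lower_central_2)

lemma normal_if_between_lower_central:
  assumes K: "subgroup K G" and "lower_central G 3 \<subseteq> K" "K \<subseteq> lower_central G 2"
  shows "K \<lhd> G"
proof (rule normal_invI[OF K])
  fix g h assume g: "g \<in> carrier G" and h: "h \<in> K"
  then have hc: "h \<in> carrier G" using subgroup.mem_carrier[OF K] by blast
  have "g \<otimes> h \<otimes> inv g = h \<otimes> commutator G h (inv g)"
    using g hc by (simp add: commutator_def m_assoc[symmetric])
  moreover have "commutator G h (inv g) \<in> K"
    using assms g h by (blast intro: commutator_in_lower_central_3)
  ultimately show "g \<otimes> h \<otimes> inv g \<in> K"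
    using h K by (simp add: subgroup.m_closed)
qed

lemma lower_central_3_normal: "lower_central G 3 \<lhd> G"
  by (rule normal_if_between_lower_central[OF lower_central_subgroup])
    (auto simp: lower_central_3_subset_2)

lemma commutator_centralizer_subgroup:
  assumes K: "K \<lhd> G" and y: "y \<in> carrier G"
  shows "subgroup {x \<in> carrier G. commutator G x y \<in> K} G"
proof (rule subgroupI)
  fix x assume "x \<in> {x \<in> carrier G. commutator G x y \<in> K}"
  then have x: "x \<in> carrier G" "commutator G x y \<in> K" by auto
  have "commutator G (inv x) y = x \<otimes> inv (commutator G x y) \<otimes> inv x"
    using x y by (simp add: commutator_def m_assoc inv_mult_group)
  also have "\<dots> \<in> K"
    using K x by (simp add: normal.inv_op_closed2 normal_imp_subgroup subgroup.m_inv_closed)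
  finally show "inv x \<in> {x \<in> carrier G. commutator G x y \<in> K}" using x by simp
next
  fix x1 x2 assume "x1 \<in> {x \<in> carrier G. commutator G x y \<in> K}" "x2 \<in> {x \<in> carrier G. commutator G x y \<in> K}"
  then have x: "x1 \<in> carrier G" "x2 \<in> carrier G" "commutator G x1 y \<in> K" "commutator G x2 y \<in> K"
    by auto
  have "commutator G (x1 \<otimes> x2) y = inv x2 \<otimes> commutator G x1 y \<otimes> x2 \<otimes> commutator G x2 y"
    using x y by (simp add: commutator_def m_assoc inv_mult_group)
  also have "\<dots> \<in> K"
    using K x normal.inv_op_closed1[OF K] by (simp add: normal_imp_subgroup subgroup.m_closed)
  finally show "x1 \<otimes> x2 \<in> {x \<in> carrier G. commutator G x y \<in> K}" using x by simp
next
  have "commutator G \<one> y = \<one>" using y by (simp add: commutator_def)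
  then show "{x \<in> carrier G. commutator G x y \<in> K} \<noteq> {}"
    using K subgroup.one_closed[OF normal_imp_subgroup[OF K]] by auto
qed blast

lemma lower_central_2_subset_normal:
  assumes K: "K \<lhd> G" and gen: "carrier G = generate G S"
    and comm: "\<And>a b. a \<in> S \<Longrightarrow> b \<in> S \<Longrightarrow> commutator G a b \<in> K"
  shows "lower_central G 2 \<subseteq> K"
proof -
  have S: "S \<subseteq> carrier G" unfolding gen by (blast intro: generate.incl)
  have first: "commutator G x y \<in> K"
    if "x \<in> carrier G" "y \<in> carrier G" "\<And>a. a \<in> S \<Longrightarrow> commutator G a y \<in> K" for x y
  proof -
    have "generate G S \<subseteq> {x \<in> carrier G. commutator G x y \<in> K}"
      using that(2,3) S by (intro generate_subgroup_incl commutator_centralizer_subgroup[OF K]) auto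
    then show ?thesis using that(1) gen by blast
  qed
  have "commutator G x y \<in> K" if "x \<in> carrier G" "y \<in> carrier G" for x y
  proof (rule first[OF that])
    fix a assume a: "a \<in> S"
    have "commutator G y a \<in> K"
      using a S that by (auto intro: first[of y a] comm)
    then show "commutator G a y \<in> K"
      using a S that commutator_swap[of y a] subgroup.m_inv_closed[OF normal_imp_subgroup[OF K]]
      by auto
  qed
  then show ?thesis
    unfolding lower_central_2 by (intro generate_subgroup_incl normal_imp_subgroup[OF K]) blast
qed

end

lemma (in group_hom) hom_commutator:
  "x \<in> carrier G \<Longrightarrow> y \<in> carrier G \<Longrightarrow> h (commutator G x y) = commutator H (h x) (h y)"
  by (simp add: commutator_def)

lemma (in group_hom) lower_central_image: "h ` lower_central G i \<subseteq> lower_central H i"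
proof (induction i)
  case (Suc i)
  show ?case
  proof (cases "i = 0")
    case True
    then show ?thesis using hom_closed by auto
  next
    case False
    define CG where "CG = {commutator G x y | x y. x \<in> lower_central G i \<and> y \<in> carrier G}"
    define CH where "CH = {commutator H x y | x y. x \<in> lower_central H i \<and> y \<in> carrier H}"
    have "h ` CG \<subseteq> CH"
    proof
      fix z assume "z \<in> h ` CG"
      then obtain x y where xy: "x \<in> lower_central G i" "y \<in> carrier G" "z = h (commutator G x y)"
        unfolding CG_def by blast
      have "x \<in> carrier G" using xy(1) G.lower_central_subset_carrier by blast
      then have "z = commutator H (h x) (h y)"
        using xy(2,3) by (simp add: hom_commutator)
      moreover have "h x \<in> lower_central H i" using xy(1) Suc.IH by blast
      ultimately show "z \<in> CH" using hom_closed[OF xy(2)] unfolding CH_def by blast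
    qed
    moreover have "CG \<subseteq> carrier G"
      unfolding CG_def using G.lower_central_subset_carrier by (blast intro: G.commutator_closed)
    ultimately have "h ` generate G CG \<subseteq> generate H CH"
      by (simp add: generate_img[symmetric] H.mono_generate)
    then show ?thesis
      using False by (simp add: lower_central_Suc CG_def CH_def del: lower_central.simps)
  qed
qed (use hom_closed in auto)

lemma equalizer_subgroup:
  assumes "group_hom G H f" "group_hom G H g"
  shows "subgroup {x \<in> carrier G. f x = g x} G"
proof -
  interpret f: group_hom G H f by fact
  interpret g: group_hom G H g by fact
  show ?thesis
    by (rule f.G.subgroupI) (auto intro!: exI[of _ "\<one>\<^bsub>G\<^esub>"])
qed

lemma image_eq_carrier_free_Abelian_groupI:
  assumes hom: "group_hom G (free_Abelian_group B) \<theta>"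
    and basis: "\<And>i. i \<in> B \<Longrightarrow> frag_of i \<in> \<theta> ` carrier G"
  shows "\<theta> ` carrier G = carrier (free_Abelian_group B)"
proof
  let ?F = "free_Abelian_group B"
  show "\<theta> ` carrier G \<subseteq> carrier ?F"
    using group_hom.hom_closed[OF hom] by blast
  have img: "subgroup (\<theta> ` carrier G) ?F" by (rule group_hom.img_is_subgroup[OF hom])
  show "carrier ?F \<subseteq> \<theta> ` carrier G"
  proof
    fix y assume "y \<in> carrier ?F"
    then have "Poly_Mapping.keys y \<subseteq> B" by simp
    then show "y \<in> \<theta> ` carrier G"
    proof (rule free_Abelian_group_induct)
      show "0 \<in> \<theta> ` carrier G" using subgroup.one_closed[OF img] by simp
    next
      fix a b
      assume ab: "Poly_Mapping.keys b \<subseteq> B" "a \<in> \<theta> ` carrier G" "b \<in> \<theta> ` carrier G"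
      then have "a \<otimes>\<^bsub>?F\<^esub> inv\<^bsub>?F\<^esub> b \<in> \<theta> ` carrier G"
        using subgroup.m_closed[OF img] subgroup.m_inv_closed[OF img] by blast
      then show "a - b \<in> \<theta> ` carrier G" using ab(1) by simp
    qed (rule basis)
  qed
qed

context group
begin

lemma lower_central_3_normal_in_2: "lower_central G 3 \<lhd> G\<lparr>carrier := lower_central G 2\<rparr>"
  using normal_restrict_supergroup[OF lower_central_subgroup lower_central_3_normal
      lower_central_3_subset_2] .

lemma comm_group_lower_central_quotient:
  "comm_group (G\<lparr>carrier := lower_central G 2\<rparr> Mod lower_central G 3)"
proof -
  let ?G2 = "G\<lparr>carrier := lower_central G 2\<rparr>" and ?N = "lower_central G 3"
  note N = lower_central_3_normal_in_2
  show ?thesis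
  proof (rule group.group_comm_groupI[OF normal.factorgroup_is_group[OF N]])
    fix A B assume "A \<in> carrier (?G2 Mod ?N)" "B \<in> carrier (?G2 Mod ?N)"
    then obtain x y where xy: "x \<in> lower_central G 2" "y \<in> lower_central G 2"
      and A: "A = ?N #> x" and B: "B = ?N #> y"
      by (auto simp: carrier_FactGroup)
    then have c: "x \<in> carrier G" "y \<in> carrier G"
      using lower_central_subset_carrier by auto
    have "x \<otimes> y \<otimes> inv (y \<otimes> x) = commutator G (inv x) (inv y)"
      using c by (simp add: commutator_def m_assoc inv_mult_group)
    also have "\<dots> \<in> ?N"
      using xy c subgroup.m_inv_closed[OF lower_central_subgroup]
      by (intro commutator_in_lower_central_3) auto
    finally have "?N #> (x \<otimes> y) = ?N #> (y \<otimes> x)"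
      using c lower_central_subgroup
      by (metis m_closed repr_independence subgroup.rcos_module_rev is_group)
    then show "A \<otimes>\<^bsub>?G2 Mod ?N\<^esub> B = B \<otimes>\<^bsub>?G2 Mod ?N\<^esub> A"
      using normal.rcos_sum[OF N] xy by (simp add: A B)
  qed
qed

lemma commutator_in_normal_of_braid:
  assumes K: "K \<lhd> G" and c: "x \<in> carrier G" "y \<in> carrier G" "z \<in> carrier G"
    and braid: "x \<otimes> y \<otimes> z = z \<otimes> y \<otimes> x"
    and xy: "commutator G x y \<in> K" and yz: "commutator G y z \<in> K"
  shows "commutator G x z \<in> K"
proof -
  have "inv x \<otimes> inv y \<otimes> inv z \<otimes> x \<otimes> y \<otimes> z = inv (z \<otimes> y \<otimes> x) \<otimes> (x \<otimes> y \<otimes> z)"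
    using c by (simp add: m_assoc inv_mult_group)
  also have "\<dots> = \<one>" using braid c by simp
  finally have one: "inv x \<otimes> inv y \<otimes> inv z \<otimes> x \<otimes> y \<otimes> z = \<one>" .
  have "commutator G x z =
      (inv x \<otimes> inv (commutator G y z) \<otimes> x) \<otimes> (inv x \<otimes> inv y \<otimes> inv z \<otimes> x \<otimes> y \<otimes> z)
        \<otimes> (inv z \<otimes> inv (commutator G x y) \<otimes> z)"
    using c by (simp add: commutator_def m_assoc inv_mult_group)
  also have "\<dots> = (inv x \<otimes> inv (commutator G y z) \<otimes> x) \<otimes> (inv z \<otimes> inv (commutator G x y) \<otimes> z)"
    using c by (simp add: one)
  also have "\<dots> \<in> K"
    using K c xy yz normal.inv_op_closed1[OF K]
    by (simp add: normal_imp_subgroup subgroup.m_closed subgroup.m_inv_closed)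
  finally show ?thesis .
qed

lemma lower_central_quotient_equalizer_subgroup:
  assumes \<theta>: "\<theta> \<in> hom (G\<lparr>carrier := lower_central G 2\<rparr>) F" and F: "group F"
    and h: "h \<in> hom F (G\<lparr>carrier := lower_central G 2\<rparr> Mod lower_central G 3)"
  shows "subgroup {y \<in> lower_central G 2. lower_central G 3 #> y = h (\<theta> y)} G"
proof -
  let ?G2 = "G\<lparr>carrier := lower_central G 2\<rparr>" and ?N = "lower_central G 3"
  have G2: "group ?G2" by (rule subgroup_imp_group[OF lower_central_subgroup])
  have Q: "group (?G2 Mod ?N)" by (rule normal.factorgroup_is_group[OF lower_central_3_normal_in_2])
  have "group_hom ?G2 (?G2 Mod ?N) (\<lambda>y. ?N #> y)"
    using normal.r_coset_hom_Mod[OF lower_central_3_normal_in_2] G2 Q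
    by (simp add: group_hom_def group_hom_axioms_def)
  moreover have "group_hom ?G2 (?G2 Mod ?N) (h \<circ> \<theta>)"
    using Group.hom_compose[OF \<theta> h] G2 Q by (simp add: group_hom_def group_hom_axioms_def)
  ultimately have "subgroup {y \<in> carrier ?G2. ?N #> y = (h \<circ> \<theta>) y} ?G2"
    by (rule equalizer_subgroup)
  then have "subgroup {y \<in> lower_central G 2. ?N #> y = h (\<theta> y)} ?G2"
    by simp
  then show ?thesis
    by (rule incl_subgroup[OF lower_central_subgroup])
qed

lemma lower_central_quotient_kernel:
  assumes gen: "carrier G = generate G S"
    and \<theta>: "\<theta> \<in> hom (G\<lparr>carrier := lower_central G 2\<rparr>) (free_Abelian_group B)"
    and \<theta>3: "\<And>x. x \<in> lower_central G 3 \<Longrightarrow> \<theta> x = 0"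
    and c2: "c ` B \<subseteq> lower_central G 2" and \<theta>c: "\<And>i. i \<in> B \<Longrightarrow> \<theta> (c i) = frag_of i"
    and span: "\<And>K a b. K \<lhd> G \<Longrightarrow> c ` B \<subseteq> K \<Longrightarrow> a \<in> S \<Longrightarrow> b \<in> S \<Longrightarrow>
      commutator G a b \<in> K"
    and x: "x \<in> lower_central G 2" "\<theta> x = 0"
  shows "x \<in> lower_central G 3"
proof -
  let ?G2 = "G\<lparr>carrier := lower_central G 2\<rparr>" and ?N = "lower_central G 3"
  let ?Q = "?G2 Mod ?N" and ?F = "free_Abelian_group B"
  have Q: "comm_group ?Q" by (rule comm_group_lower_central_quotient)
  have "(\<lambda>i. ?N #> c i) ` B \<subseteq> carrier ?Q"
    using c2 by (auto simp: carrier_FactGroup)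
  then obtain h where h: "h \<in> hom ?F ?Q" and h_of: "\<And>i. i \<in> B \<Longrightarrow> h (frag_of i) = ?N #> c i"
    by (rule comm_group.free_Abelian_group_universal[OF Q]) auto
  have h0: "h 0 = ?N"
    using group_hom.hom_one[of ?F ?Q h] h Q
    by (simp add: group_hom_def group_hom_axioms_def comm_group_def)
  \<comment> \<open>The quotient map agrees with \<open>h \<circ> \<theta>\<close> on the whole of \<open>\<Gamma>\<^sub>2\<close>, so the kernel of
    \<open>\<theta>\<close> lies in \<open>\<Gamma>\<^sub>3\<close>.\<close>
  define E where "E = {y \<in> lower_central G 2. ?N #> y = h (\<theta> y)}"
  have E: "subgroup E G"
    unfolding E_def by (rule lower_central_quotient_equalizer_subgroup[OF \<theta> _ h]) simp
  have N_E: "?N \<subseteq> E"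
  proof
    fix y assume y: "y \<in> ?N"
    then have "?N #> y = h (\<theta> y)"
      using \<theta>3 h0 subgroup.rcos_const[OF lower_central_subgroup is_group] by simp
    then show "y \<in> E" using y lower_central_3_subset_2 by (auto simp: E_def)
  qed
  have E_normal: "E \<lhd> G"
    by (rule normal_if_between_lower_central[OF E N_E]) (auto simp: E_def)
  have "c ` B \<subseteq> E"
    using c2 h_of \<theta>c by (auto simp: E_def)
  then have "lower_central G 2 \<subseteq> E"
    using lower_central_2_subset_normal[OF E_normal gen span[OF E_normal]] by blast
  then have "?N #> x = ?N"
    using x h0 by (auto simp: E_def)
  moreover have "x \<in> ?N #> x"
    using rcos_self[OF _ lower_central_subgroup] x(1) lower_central_subset_carrier by blast
  ultimately show ?thesis by simp
qed

theorem lower_central_quotient_iso_free_Abelian_group: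
  assumes gen: "carrier G = generate G S"
    and \<theta>: "\<theta> \<in> hom (G\<lparr>carrier := lower_central G 2\<rparr>) (free_Abelian_group B)"
    and \<theta>3: "\<And>x. x \<in> lower_central G 3 \<Longrightarrow> \<theta> x = 0"
    and c2: "c ` B \<subseteq> lower_central G 2" and \<theta>c: "\<And>i. i \<in> B \<Longrightarrow> \<theta> (c i) = frag_of i"
    and span: "\<And>K a b. K \<lhd> G \<Longrightarrow> c ` B \<subseteq> K \<Longrightarrow> a \<in> S \<Longrightarrow> b \<in> S \<Longrightarrow>
      commutator G a b \<in> K"
  shows "G\<lparr>carrier := lower_central G 2\<rparr> Mod lower_central G 3 \<cong> free_Abelian_group B"
proof -
  let ?G2 = "G\<lparr>carrier := lower_central G 2\<rparr>" and ?F = "free_Abelian_group B"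
  have hom: "group_hom ?G2 ?F \<theta>"
    using \<theta> subgroup_imp_group[OF lower_central_subgroup]
    by (simp add: group_hom_def group_hom_axioms_def)
  have "kernel ?G2 ?F \<theta> = lower_central G 3"
  proof (intro equalityI subsetI)
    fix x assume "x \<in> kernel ?G2 ?F \<theta>"
    then have "x \<in> lower_central G 2" "\<theta> x = 0" by (simp_all add: kernel_def)
    then show "x \<in> lower_central G 3"
      using lower_central_quotient_kernel[OF gen \<theta> \<theta>3 c2 \<theta>c span] by blast
  next
    fix x assume x: "x \<in> lower_central G 3"
    then have "x \<in> lower_central G 2" using lower_central_3_subset_2 by blast
    then show "x \<in> kernel ?G2 ?F \<theta>" by (simp add: kernel_def \<theta>3[OF x])
  qed
  moreover have "\<theta> ` carrier ?G2 = carrier ?F"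
  proof (rule image_eq_carrier_free_Abelian_groupI[OF hom])
    fix i assume i: "i \<in> B"
    then have "c i \<in> carrier ?G2" using c2 by auto
    then show "frag_of i \<in> \<theta> ` carrier ?G2" using \<theta>c[OF i] by (metis image_eqI)
  qed
  ultimately show ?thesis
    using group_hom.FactGroup_iso[OF hom] by simp
qed

end

section \<open>Heisenberg groups of biadditive maps\<close>

locale biadditive =
  fixes \<beta> :: "'a::ab_group_add \<Rightarrow> 'a \<Rightarrow> 'b::ab_group_add"
  assumes add_left: "\<beta> (x + y) z = \<beta> x z + \<beta> y z"
    and add_right: "\<beta> x (y + z) = \<beta> x y + \<beta> x z"
begin

lemma zero_left [simp]: "\<beta> 0 y = 0"
  using add_left[of 0 0 y] by simp

lemma zero_right [simp]: "\<beta> x 0 = 0"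
  using add_right[of x 0 0] by simp

lemma minus_left: "\<beta> (- x) y = - \<beta> x y"
  using add_left[of "- x" x y] by (simp add: eq_neg_iff_add_eq_0)

lemma minus_right: "\<beta> x (- y) = - \<beta> x y"
  using add_right[of x "- y" y] by (simp add: eq_neg_iff_add_eq_0)

lemma diff_left: "\<beta> (x - y) z = \<beta> x z - \<beta> y z"
  using add_left[of x "- y" z] by (simp add: minus_left)

lemma diff_right: "\<beta> x (y - z) = \<beta> x y - \<beta> x z"
  using add_right[of x y "- z"] by (simp add: minus_right)

end

definition heisenberg_group :: "('a::ab_group_add \<Rightarrow> 'a \<Rightarrow> 'b::ab_group_add) \<Rightarrow> ('a \<times> 'b) monoid" where
  "heisenberg_group \<beta> =
     \<lparr>carrier = UNIV,
      monoid.mult = (\<lambda>p q. (fst p + fst q, snd p + snd q + \<beta> (fst p) (fst q))),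
      one = (0, 0)\<rparr>"

lemma carrier_heisenberg_group [simp]: "carrier (heisenberg_group \<beta>) = UNIV"
  by (simp add: heisenberg_group_def)

lemma mult_heisenberg_group [simp]:
  "p \<otimes>\<^bsub>heisenberg_group \<beta>\<^esub> q = (fst p + fst q, snd p + snd q + \<beta> (fst p) (fst q))"
  by (simp add: heisenberg_group_def)

lemma one_heisenberg_group [simp]: "\<one>\<^bsub>heisenberg_group \<beta>\<^esub> = (0, 0)"
  by (simp add: heisenberg_group_def)

context biadditive
begin

lemma group_heisenberg_group: "group (heisenberg_group \<beta>)"
proof (rule groupI)
  fix p :: "'a \<times> 'b"
  show "\<exists>q\<in>carrier (heisenberg_group \<beta>). q \<otimes>\<^bsub>heisenberg_group \<beta>\<^esub> p = \<one>\<^bsub>heisenberg_group \<beta>\<^esub>"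
    by (rule bexI[of _ "(- fst p, - snd p + \<beta> (fst p) (fst p))"]) (simp_all add: minus_left)
qed (simp_all add: add_left add_right ac_simps)

lemma inv_heisenberg_group [simp]:
  "inv\<^bsub>heisenberg_group \<beta>\<^esub> p = (- fst p, - snd p + \<beta> (fst p) (fst p))"
  by (rule group.inv_equality[OF group_heisenberg_group]) (simp_all add: minus_left)

lemma commutator_heisenberg_group:
  "commutator (heisenberg_group \<beta>) p q = (0, \<beta> (fst p) (fst q) - \<beta> (fst q) (fst p))"
  by (simp add: commutator_def add_left add_right minus_left minus_right diff_left diff_right
      algebra_simps)

lemma heisenberg_group_commute_iff:
  "p \<otimes>\<^bsub>heisenberg_group \<beta>\<^esub> q = q \<otimes>\<^bsub>heisenberg_group \<beta>\<^esub> p \<longleftrightarrow>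
   \<beta> (fst p) (fst q) - \<beta> (fst q) (fst p) = 0"
  by (auto simp: algebra_simps)

lemma heisenberg_group_braid_iff:
  "p \<otimes>\<^bsub>heisenberg_group \<beta>\<^esub> q \<otimes>\<^bsub>heisenberg_group \<beta>\<^esub> r =
   r \<otimes>\<^bsub>heisenberg_group \<beta>\<^esub> q \<otimes>\<^bsub>heisenberg_group \<beta>\<^esub> p \<longleftrightarrow>
   (\<beta> (fst p) (fst q) - \<beta> (fst q) (fst p)) + (\<beta> (fst p) (fst r) - \<beta> (fst r) (fst p))
     + (\<beta> (fst q) (fst r) - \<beta> (fst r) (fst q)) = 0"
  by (auto simp: add_left add_right algebra_simps)

lemma lower_central_2_heisenberg_group:
  "lower_central (heisenberg_group \<beta>) 2 \<subseteq> {p. fst p = 0}"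
proof -
  interpret heisenberg: group "heisenberg_group \<beta>" by (rule group_heisenberg_group)
  have "subgroup {p. fst p = 0} (heisenberg_group \<beta>)"
    by (rule heisenberg.subgroupI) auto
  then show ?thesis
    unfolding lower_central_2
    by (rule heisenberg.generate_subgroup_incl[rotated]) (auto simp: commutator_heisenberg_group)
qed

lemma lower_central_3_heisenberg_group:
  "lower_central (heisenberg_group \<beta>) 3 \<subseteq> {\<one>\<^bsub>heisenberg_group \<beta>\<^esub>}"
proof -
  interpret heisenberg: group "heisenberg_group \<beta>" by (rule group_heisenberg_group)
  show ?thesis
    unfolding lower_central_3 using lower_central_2_heisenberg_group
    by (intro heisenberg.generate_subgroup_incl heisenberg.triv_subgroup)
      (auto simp: commutator_heisenberg_group)
qed

end

definition frag_on :: "'i set \<Rightarrow> ('i \<Rightarrow> int) \<Rightarrow> 'i \<Rightarrow>\<^sub>0 int" where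
  "frag_on I f = (\<Sum>i\<in>I. frag_cmul (f i) (frag_of i))"

lemma frag_on_add: "frag_on I (f + g) = frag_on I f + frag_on I g"
  by (simp add: frag_on_def frag_cmul_distrib sum.distrib)

lemma frag_on_zero [simp]: "frag_on I 0 = 0"
  by (simp add: frag_on_def)

lemma frag_on_in_free_Abelian_group: "frag_on I f \<in> carrier (free_Abelian_group I)"
  unfolding frag_on_def
  by (rule sum_closed_free_Abelian_group) (auto dest: subsetD[OF keys_cmul])

lemma frag_on_indicator:
  assumes "finite I" "i \<in> I"
  shows "frag_on I (indicator {i}) = frag_of i"
proof -
  have "frag_on I (indicator {i}) = (\<Sum>j\<in>I. if j = i then frag_of j else 0)"
    unfolding frag_on_def by (rule sum.cong) (auto simp: indicator_def)
  then show ?thesis using assms by simp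
qed

lemma (in group) heisenberg_coordinates_hom:
  assumes "biadditive \<beta>" and \<phi>: "\<phi> \<in> hom G (heisenberg_group \<beta>)"
  shows "(\<lambda>x. frag_on I (snd (\<phi> x))) \<in> hom (G\<lparr>carrier := lower_central G 2\<rparr>) (free_Abelian_group I)"
    and "x \<in> lower_central G 3 \<Longrightarrow> frag_on I (snd (\<phi> x)) = 0"
proof -
  interpret biadditive \<beta> by fact
  interpret \<phi>: group_hom G "heisenberg_group \<beta>" \<phi>
    using \<phi> group_heisenberg_group by (simp add: group_hom_def group_hom_axioms_def is_group)
  have fst0: "fst (\<phi> x) = 0" if "x \<in> lower_central G 2" for x
    using that \<phi>.lower_central_image[of 2] lower_central_2_heisenberg_group by blast
  show "(\<lambda>x. frag_on I (snd (\<phi> x))) \<in> hom (G\<lparr>carrier := lower_central G 2\<rparr>) (free_Abelian_group I)"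
  proof (rule homI)
    fix x y assume "x \<in> carrier (G\<lparr>carrier := lower_central G 2\<rparr>)" "y \<in> carrier (G\<lparr>carrier := lower_central G 2\<rparr>)"
    then have x: "x \<in> lower_central G 2" "x \<in> carrier G" and y: "y \<in> carrier G"
      using lower_central_subset_carrier by auto
    then have "snd (\<phi> (x \<otimes> y)) = snd (\<phi> x) + snd (\<phi> y)"
      by (simp add: fst0)
    then show "frag_on I (snd (\<phi> (x \<otimes>\<^bsub>G\<lparr>carrier := lower_central G 2\<rparr>\<^esub> y))) =
        frag_on I (snd (\<phi> x)) \<otimes>\<^bsub>free_Abelian_group I\<^esub> frag_on I (snd (\<phi> y))"
      by (simp add: frag_on_add)
  qed (rule frag_on_in_free_Abelian_group)
  show "frag_on I (snd (\<phi> x)) = 0" if "x \<in> lower_central G 3"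
    using that \<phi>.lower_central_image[of 3] lower_central_3_heisenberg_group by force
qed

definition triangular_form ::
  "'a::linorder set \<Rightarrow> ('a \<Rightarrow> 'a \<Rightarrow> 'i \<Rightarrow> int) \<Rightarrow> ('a \<Rightarrow> int) \<Rightarrow> ('a \<Rightarrow> int) \<Rightarrow> 'i \<Rightarrow> int" where
  "triangular_form S \<omega> x y = (\<lambda>t. \<Sum>a\<in>S. x a * (\<Sum>b\<in>S. y b * (of_bool (a < b) * \<omega> a b t)))"

lemma biadditive_triangular_form: "biadditive (triangular_form S \<omega>)"
  by unfold_locales (simp_all add: triangular_form_def fun_eq_iff distrib_left distrib_right sum.distrib)

lemma triangular_form_indicator:
  assumes "finite S" "a \<in> S" "b \<in> S"
  shows "triangular_form S \<omega> (indicator {a}) (indicator {b}) = (if a < b then \<omega> a b else 0)"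
  using assms by (simp add: triangular_form_def indicator_def fun_eq_iff)

lemma triangular_form_indicator_antisym:
  assumes "finite S" "a \<in> S" "b \<in> S" "a \<noteq> b" "\<omega> b a = - \<omega> a b"
  shows "triangular_form S \<omega> (indicator {a}) (indicator {b})
       - triangular_form S \<omega> (indicator {b}) (indicator {a}) = \<omega> a b"
  using assms by (cases "a < b") (simp_all add: triangular_form_indicator)

section \<open>The presentation of the virtual pure braid group\<close>

lemma vp_rel_append_context: "vp_rel n u v \<Longrightarrow> vp_rel n (x @ u @ y) (x @ v @ y)"
proof (induction rule: vp_rel.induct)
  case (refl w)
  then show ?case by (rule vp_rel.refl)
next
  case (sym u v)
  show ?case using sym.IH by (rule vp_rel.sym)
next
  case (trans u v w)
  show ?case using trans.IH by (rule vp_rel.trans)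
next
  case (cancel g u b v)
  then show ?case using vp_rel.cancel[of n g "x @ u" b "v @ y"] by simp
next
  case (relator r u v)
  then show ?case using vp_rel.relator[of n r "x @ u" "v @ y"] by simp
qed

lemma vp_rel_append: "vp_rel n u u' \<Longrightarrow> vp_rel n v v' \<Longrightarrow> vp_rel n (u @ v) (u' @ v')"
  using vp_rel_append_context[of n u u' "[]" v] vp_rel_append_context[of n v v' u' "[]"]
  by (auto intro: vp_rel.trans)

lemma vp_word_Nil [simp]: "vp_word n []"
  by (simp add: vp_word_def)

lemma vp_word_Cons [simp]: "vp_word n (l # w) \<longleftrightarrow> vp_gen n (fst l) \<and> vp_word n w"
  by (simp add: vp_word_def)

lemma vp_word_append [simp]: "vp_word n (u @ v) \<longleftrightarrow> vp_word n u \<and> vp_word n v"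
  by (auto simp: vp_word_def)

lemma vp_relator_vp_word: "vp_relator n r \<Longrightarrow> vp_word n r"
  by (auto simp: vp_relator_def vp_gen_def)

lemma vp_rel_vp_word: "vp_rel n u v \<Longrightarrow> vp_word n u \<longleftrightarrow> vp_word n v"
  by (induction rule: vp_rel.induct) (auto dest: vp_relator_vp_word)

lemma equiv_vp_equiv: "equiv {w. vp_word n w} (vp_equiv n)"
  unfolding equiv_def refl_on_def sym_def trans_def vp_equiv_def
  by (auto intro: vp_rel.refl vp_rel.sym vp_rel.trans)

definition vp_class :: "nat \<Rightarrow> vp_letter list \<Rightarrow> vp_letter list set" where
  "vp_class n w = vp_equiv n `` {w}"

lemma vp_class_in_carrier: "vp_word n w \<Longrightarrow> vp_class n w \<in> carrier (VP n)"
  unfolding vp_class_def VP_def by (auto intro: quotientI)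

lemma carrier_VP_E:
  assumes "A \<in> carrier (VP n)"
  obtains w where "vp_word n w" "A = vp_class n w"
  using assms unfolding vp_class_def VP_def by (auto elim: quotientE)

lemma mem_vp_class: "u \<in> vp_class n w \<longleftrightarrow> vp_word n w \<and> vp_word n u \<and> vp_rel n w u"
  by (auto simp: vp_class_def vp_equiv_def)

lemma vp_class_eqI: "vp_word n u \<Longrightarrow> vp_rel n u v \<Longrightarrow> vp_class n u = vp_class n v"
  using equiv_class_eq[OF equiv_vp_equiv, of u v n] vp_rel_vp_word[of n u v]
  by (simp add: vp_class_def vp_equiv_def)

lemma mult_vp_class:
  assumes "vp_word n u" "vp_word n v"
  shows "vp_class n u \<otimes>\<^bsub>VP n\<^esub> vp_class n v = vp_class n (u @ v)"
proof -
  have "vp_equiv n `` {x @ y | x y. x \<in> vp_class n u \<and> y \<in> vp_class n v} = vp_class n (u @ v)"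
  proof (intro equalityI subsetI)
    fix z assume "z \<in> vp_equiv n `` {x @ y | x y. x \<in> vp_class n u \<and> y \<in> vp_class n v}"
    then obtain x y where "x \<in> vp_class n u" "y \<in> vp_class n v" "(x @ y, z) \<in> vp_equiv n"
      by auto
    then show "z \<in> vp_class n (u @ v)"
      by (auto simp: mem_vp_class vp_equiv_def intro: vp_rel.trans vp_rel_append)
  next
    fix z assume "z \<in> vp_class n (u @ v)"
    moreover have "u \<in> vp_class n u" "v \<in> vp_class n v"
      using assms by (auto simp: mem_vp_class intro: vp_rel.refl)
    ultimately show "z \<in> vp_equiv n `` {x @ y | x y. x \<in> vp_class n u \<and> y \<in> vp_class n v}"
      by (auto simp: vp_class_def)
  qed
  then show ?thesis by (simp add: VP_def)
qed

lemma one_VP: "\<one>\<^bsub>VP n\<^esub> = vp_class n []"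
  by (simp add: VP_def vp_class_def)

definition word_inv :: "('x \<times> bool) list \<Rightarrow> ('x \<times> bool) list" where
  "word_inv w = rev (map (\<lambda>(a, b). (a, \<not> b)) w)"

lemma vp_word_word_inv [simp]: "vp_word n (word_inv w) \<longleftrightarrow> vp_word n w"
  by (auto simp: word_inv_def vp_word_def)

lemma vp_rel_word_inv: "vp_word n w \<Longrightarrow> vp_rel n (word_inv w @ w) []"
proof (induction w)
  case (Cons l w)
  obtain a b where l: "l = (a, b)" by (cases l)
  have "vp_rel n (word_inv w @ [(a, \<not> b), (a, \<not> \<not> b)] @ w) (word_inv w @ w)"
    using Cons.prems l by (intro vp_rel.cancel) simp
  then show ?case
    using Cons l by (auto simp: word_inv_def intro: vp_rel.trans)
qed (simp add: word_inv_def vp_rel.refl)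

lemma group_VP: "group (VP n)"
proof (rule groupI)
  fix x y assume "x \<in> carrier (VP n)" "y \<in> carrier (VP n)"
  then show "x \<otimes>\<^bsub>VP n\<^esub> y \<in> carrier (VP n)"
    by (elim carrier_VP_E) (simp add: mult_vp_class vp_class_in_carrier)
next
  fix x y z assume "x \<in> carrier (VP n)" "y \<in> carrier (VP n)" "z \<in> carrier (VP n)"
  then show "x \<otimes>\<^bsub>VP n\<^esub> y \<otimes>\<^bsub>VP n\<^esub> z = x \<otimes>\<^bsub>VP n\<^esub> (y \<otimes>\<^bsub>VP n\<^esub> z)"
    by (elim carrier_VP_E) (simp add: mult_vp_class)
next
  fix x assume "x \<in> carrier (VP n)"
  then show "\<one>\<^bsub>VP n\<^esub> \<otimes>\<^bsub>VP n\<^esub> x = x"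
    by (elim carrier_VP_E) (simp add: mult_vp_class one_VP)
next
  fix x assume "x \<in> carrier (VP n)"
  then obtain w where w: "vp_word n w" "x = vp_class n w" by (rule carrier_VP_E)
  then have "vp_class n (word_inv w) \<otimes>\<^bsub>VP n\<^esub> x = \<one>\<^bsub>VP n\<^esub>"
    by (simp add: mult_vp_class one_VP vp_class_eqI vp_rel_word_inv)
  then show "\<exists>y\<in>carrier (VP n). y \<otimes>\<^bsub>VP n\<^esub> x = \<one>\<^bsub>VP n\<^esub>"
    using w vp_class_in_carrier by (metis vp_word_word_inv)
qed (simp add: one_VP vp_class_in_carrier)

definition vp_lambda :: "nat \<Rightarrow> nat \<times> nat \<Rightarrow> vp_letter list set" where
  "vp_lambda n a = vp_class n [(a, True)]"

lemma vp_lambda_in_carrier: "vp_gen n a \<Longrightarrow> vp_lambda n a \<in> carrier (VP n)"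
  by (simp add: vp_lambda_def vp_class_in_carrier)

primrec word_eval :: "('g, 'm) monoid_scheme \<Rightarrow> ('x \<Rightarrow> 'g) \<Rightarrow> ('x \<times> bool) list \<Rightarrow> 'g" where
  "word_eval G f [] = \<one>\<^bsub>G\<^esub>"
| "word_eval G f (l # w) =
     (if snd l then f (fst l) else inv\<^bsub>G\<^esub> f (fst l)) \<otimes>\<^bsub>G\<^esub> word_eval G f w"

context group
begin

lemma word_eval_closed:
  "(\<And>l. l \<in> set w \<Longrightarrow> f (fst l) \<in> carrier G) \<Longrightarrow> word_eval G f w \<in> carrier G"
  by (induction w) auto

lemma word_eval_append:
  assumes "\<And>l. l \<in> set (u @ v) \<Longrightarrow> f (fst l) \<in> carrier G"
  shows "word_eval G f (u @ v) = word_eval G f u \<otimes> word_eval G f v"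
  using assms by (induction u) (auto simp: m_assoc word_eval_closed)

lemma commutator_word_eq_one_iff:
  "x \<in> carrier G \<Longrightarrow> y \<in> carrier G \<Longrightarrow>
   x \<otimes> (y \<otimes> (inv x \<otimes> inv y)) = \<one> \<longleftrightarrow> x \<otimes> y = y \<otimes> x"
  using inv_solve_right'[of \<one> "x \<otimes> y" "y \<otimes> x"] by (simp add: m_assoc inv_mult_group)

lemma braid_word_eq_one_iff:
  "x \<in> carrier G \<Longrightarrow> y \<in> carrier G \<Longrightarrow> z \<in> carrier G \<Longrightarrow>
   x \<otimes> (y \<otimes> (z \<otimes> (inv x \<otimes> (inv y \<otimes> inv z)))) = \<one> \<longleftrightarrow> x \<otimes> y \<otimes> z = z \<otimes> y \<otimes> x"
  using inv_solve_right'[of \<one> "x \<otimes> y \<otimes> z" "z \<otimes> y \<otimes> x"] by (simp add: m_assoc inv_mult_group)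

lemma word_eval_vp_relators_iff:
  assumes f: "\<And>a. vp_gen n a \<Longrightarrow> f a \<in> carrier G"
  shows "(\<forall>r. vp_relator n r \<longrightarrow> word_eval G f r = \<one>) \<longleftrightarrow>
    (\<forall>i j k l. distinct [i, j, k, l] \<and> {i, j, k, l} \<subseteq> {1..n} \<longrightarrow>
       f (i, j) \<otimes> f (k, l) = f (k, l) \<otimes> f (i, j)) \<and>
    (\<forall>i j k. distinct [i, j, k] \<and> {i, j, k} \<subseteq> {1..n} \<longrightarrow>
       f (k, i) \<otimes> f (k, j) \<otimes> f (i, j) = f (i, j) \<otimes> f (k, j) \<otimes> f (k, i))"
    (is "_ \<longleftrightarrow> ?rhs")
proof -
  have c: "f (a, b) \<in> carrier G" if "a \<noteq> b" "a \<in> {1..n}" "b \<in> {1..n}" for a b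
    using that by (simp add: f vp_gen_def)
  have comm: "word_eval G f [((i, j), True), ((k, l), True), ((i, j), False), ((k, l), False)] = \<one>
      \<longleftrightarrow> f (i, j) \<otimes> f (k, l) = f (k, l) \<otimes> f (i, j)"
    if "distinct [i, j, k, l]" "{i, j, k, l} \<subseteq> {1..n}" for i j k l
    using that by (simp add: c commutator_word_eq_one_iff)
  have braid: "word_eval G f [((k, i), True), ((k, j), True), ((i, j), True),
        ((k, i), False), ((k, j), False), ((i, j), False)] = \<one>
      \<longleftrightarrow> f (k, i) \<otimes> f (k, j) \<otimes> f (i, j) = f (i, j) \<otimes> f (k, j) \<otimes> f (k, i)"
    if "distinct [i, j, k]" "{i, j, k} \<subseteq> {1..n}" for i j k
    using that by (simp add: c braid_word_eq_one_iff)
  have "(\<forall>r. vp_relator n r \<longrightarrow> word_eval G f r = \<one>) \<longleftrightarrow>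
    (\<forall>i j k l. distinct [i, j, k, l] \<and> {i, j, k, l} \<subseteq> {1..n} \<longrightarrow>
       word_eval G f [((i, j), True), ((k, l), True), ((i, j), False), ((k, l), False)] = \<one>) \<and>
    (\<forall>i j k. distinct [i, j, k] \<and> {i, j, k} \<subseteq> {1..n} \<longrightarrow>
       word_eval G f [((k, i), True), ((k, j), True), ((i, j), True),
         ((k, i), False), ((k, j), False), ((i, j), False)] = \<one>)"
    unfolding vp_relator_def by blast
  also have "\<dots> \<longleftrightarrow> ?rhs"
    using comm braid by (intro conj_cong all_cong1 imp_cong) auto
  finally show ?thesis .
qed

end

lemma vp_class_word_eval: "vp_word n w \<Longrightarrow> vp_class n w = word_eval (VP n) (vp_lambda n) w"
proof (induction w)
  case (Cons l w)
  interpret group "VP n" by (rule group_VP)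
  obtain a b where l: "l = (a, b)" by (cases l)
  have a: "vp_gen n a" using Cons.prems l by simp
  have "vp_class n [(a, False)] \<otimes>\<^bsub>VP n\<^esub> vp_lambda n a = \<one>\<^bsub>VP n\<^esub>"
    using a vp_rel.cancel[of n a "[]" False "[]"]
    by (simp add: vp_lambda_def one_VP mult_vp_class vp_class_eqI)
  then have "vp_class n [(a, False)] = inv\<^bsub>VP n\<^esub> vp_lambda n a"
    using a by (simp add: inv_equality vp_lambda_in_carrier vp_class_in_carrier)
  then have "vp_class n [(a, b)] = (if b then vp_lambda n a else inv\<^bsub>VP n\<^esub> vp_lambda n a)"
    by (simp add: vp_lambda_def)
  then show ?case
    using Cons l mult_vp_class[of n "[(a, b)]" w] by (cases b) simp_all
qed (simp add: one_VP)

lemma VP_generated: "carrier (VP n) = generate (VP n) (vp_lambda n ` {a. vp_gen n a})"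
proof
  interpret group "VP n" by (rule group_VP)
  show "generate (VP n) (vp_lambda n ` {a. vp_gen n a}) \<subseteq> carrier (VP n)"
    by (rule generate_incl) (auto simp: vp_lambda_in_carrier)
  have "word_eval (VP n) (vp_lambda n) w \<in> generate (VP n) (vp_lambda n ` {a. vp_gen n a})"
    if "vp_word n w" for w
    using that
    by (induction w) (auto intro: generate.intros)
  then show "carrier (VP n) \<subseteq> generate (VP n) (vp_lambda n ` {a. vp_gen n a})"
    by (auto elim!: carrier_VP_E simp: vp_class_word_eval)
qed

lemma word_eval_vp_relator: "vp_relator n r \<Longrightarrow> word_eval (VP n) (vp_lambda n) r = \<one>\<^bsub>VP n\<^esub>"
  using vp_rel.relator[of n r "[]" "[]"]
  by (simp add: one_VP vp_class_word_eval[symmetric] vp_relator_vp_word vp_class_eqI)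

lemma vp_lambda_relations:
  "(\<forall>i j k l. distinct [i, j, k, l] \<and> {i, j, k, l} \<subseteq> {1..n} \<longrightarrow>
      vp_lambda n (i, j) \<otimes>\<^bsub>VP n\<^esub> vp_lambda n (k, l) = vp_lambda n (k, l) \<otimes>\<^bsub>VP n\<^esub> vp_lambda n (i, j)) \<and>
   (\<forall>i j k. distinct [i, j, k] \<and> {i, j, k} \<subseteq> {1..n} \<longrightarrow>
      vp_lambda n (k, i) \<otimes>\<^bsub>VP n\<^esub> vp_lambda n (k, j) \<otimes>\<^bsub>VP n\<^esub> vp_lambda n (i, j) =
      vp_lambda n (i, j) \<otimes>\<^bsub>VP n\<^esub> vp_lambda n (k, j) \<otimes>\<^bsub>VP n\<^esub> vp_lambda n (k, i))"
  using group.word_eval_vp_relators_iff[OF group_VP, of n "vp_lambda n", OF vp_lambda_in_carrier]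
    word_eval_vp_relator
  by blast

lemma vp_lambda_commute:
  "distinct [i, j, k, l] \<Longrightarrow> {i, j, k, l} \<subseteq> {1..n} \<Longrightarrow>
   vp_lambda n (i, j) \<otimes>\<^bsub>VP n\<^esub> vp_lambda n (k, l) = vp_lambda n (k, l) \<otimes>\<^bsub>VP n\<^esub> vp_lambda n (i, j)"
  by (rule vp_lambda_relations[THEN conjunct1, rule_format]) simp

lemma vp_lambda_braid:
  "distinct [i, j, k] \<Longrightarrow> {i, j, k} \<subseteq> {1..n} \<Longrightarrow>
   vp_lambda n (k, i) \<otimes>\<^bsub>VP n\<^esub> vp_lambda n (k, j) \<otimes>\<^bsub>VP n\<^esub> vp_lambda n (i, j) =
   vp_lambda n (i, j) \<otimes>\<^bsub>VP n\<^esub> vp_lambda n (k, j) \<otimes>\<^bsub>VP n\<^esub> vp_lambda n (k, i)"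
  by (rule vp_lambda_relations[THEN conjunct2, rule_format]) simp

definition VP_lift :: "('g, 'm) monoid_scheme \<Rightarrow> (nat \<times> nat \<Rightarrow> 'g) \<Rightarrow> vp_letter list set \<Rightarrow> 'g" where
  "VP_lift G f A = word_eval G f (SOME w. w \<in> A)"

context
  fixes G (structure) and f n
  assumes G: "group G" and f: "\<And>a. vp_gen n a \<Longrightarrow> f a \<in> carrier G"
    and relators: "\<And>r. vp_relator n r \<Longrightarrow> word_eval G f r = \<one>"
begin

interpretation group G by (rule G)

lemma word_eval_vp_closed: "vp_word n w \<Longrightarrow> word_eval G f w \<in> carrier G"
  by (rule word_eval_closed) (auto simp: vp_word_def f)

lemma word_eval_vp_append:
  "vp_word n u \<Longrightarrow> vp_word n v \<Longrightarrow> word_eval G f (u @ v) = word_eval G f u \<otimes> word_eval G f v"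
  by (rule word_eval_append) (auto simp: vp_word_def f)

lemma word_eval_vp_rel: "vp_rel n u v \<Longrightarrow> vp_word n u \<Longrightarrow> word_eval G f u = word_eval G f v"
proof (induction rule: vp_rel.induct)
  case (sym u v)
  then show ?case using vp_rel_vp_word[OF sym.hyps] by simp
next
  case (trans u v w)
  then show ?case using vp_rel_vp_word[OF trans.hyps(1)] by simp
next
  case (cancel g u b v)
  then show ?case
    using f[OF cancel.hyps] by (cases b) (simp_all add: word_eval_vp_append word_eval_vp_closed)
next
  case (relator r u v)
  then show ?case
    using relators[OF relator.hyps] vp_relator_vp_word[OF relator.hyps]
    by (simp add: word_eval_vp_append word_eval_vp_closed del: word_eval.simps)
qed simp

lemma VP_lift_vp_class: "vp_word n w \<Longrightarrow> VP_lift G f (vp_class n w) = word_eval G f w"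
  unfolding VP_lift_def
  by (rule someI2[of "\<lambda>u. u \<in> vp_class n w" w])
    (auto simp: mem_vp_class vp_rel.refl intro!: word_eval_vp_rel[symmetric])

lemma VP_lift_hom: "VP_lift G f \<in> hom (VP n) G"
proof (rule homI)
  fix x assume "x \<in> carrier (VP n)"
  then show "VP_lift G f x \<in> carrier G"
    by (elim carrier_VP_E) (simp add: VP_lift_vp_class word_eval_vp_closed)
next
  fix x y assume "x \<in> carrier (VP n)" "y \<in> carrier (VP n)"
  then show "VP_lift G f (x \<otimes>\<^bsub>VP n\<^esub> y) = VP_lift G f x \<otimes> VP_lift G f y"
    by (elim carrier_VP_E) (simp add: mult_vp_class VP_lift_vp_class word_eval_vp_append)
qed

lemma VP_lift_lambda: "vp_gen n a \<Longrightarrow> VP_lift G f (vp_lambda n a) = f a"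
  using f by (simp add: vp_lambda_def VP_lift_vp_class)

end

section \<open>Commutator coordinates in the virtual pure braid group\<close>

definition vp_adjacent :: "nat \<times> nat \<Rightarrow> nat \<times> nat \<Rightarrow> bool" where
  "vp_adjacent a b \<longleftrightarrow> fst a = fst b \<or> snd a = snd b \<or> b = prod.swap a"

text \<open>A pair \<open>(a, b)\<close> in \<open>vp_basis n\<close> stands for the commutator \<open>[\<lambda>\<^sub>a, \<lambda>\<^sub>b]\<close>.\<close>

definition vp_basis :: "nat \<Rightarrow> ((nat \<times> nat) \<times> (nat \<times> nat)) set" where
  "vp_basis n = {(a, b). vp_gen n a \<and> vp_gen n b \<and> a < b \<and> vp_adjacent a b}"

definition oriented_unit :: "'a::linorder \<Rightarrow> 'a \<Rightarrow> 'a \<times> 'a \<Rightarrow> int" where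
  "oriented_unit a b = (if a < b then indicator {(a, b)} else - indicator {(b, a)})"

text \<open>The class of \<open>[\<lambda>\<^sub>a, \<lambda>\<^sub>b]\<close> modulo \<open>\<Gamma>\<^sub>3\<close> in coordinates with respect to
  \<open>vp_basis n\<close>. For a path \<open>a = (i, j)\<close>, \<open>b = (j, k)\<close> the braid relation
  \<open>\<lambda>\<^sub>i\<^sub>j \<lambda>\<^sub>i\<^sub>k \<lambda>\<^sub>j\<^sub>k = \<lambda>\<^sub>j\<^sub>k \<lambda>\<^sub>i\<^sub>k \<lambda>\<^sub>i\<^sub>j\<close> gives
  \<open>[\<lambda>\<^sub>i\<^sub>j, \<lambda>\<^sub>j\<^sub>k] \<equiv> -([\<lambda>\<^sub>i\<^sub>j, \<lambda>\<^sub>i\<^sub>k] + [\<lambda>\<^sub>i\<^sub>k, \<lambda>\<^sub>j\<^sub>k])\<close>; the reversed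
  path is the negative of a path, and generators with four distinct indices commute.\<close>

definition vp_bracket :: "nat \<times> nat \<Rightarrow> nat \<times> nat \<Rightarrow> (nat \<times> nat) \<times> (nat \<times> nat) \<Rightarrow> int" where
  "vp_bracket a b =
    (if vp_adjacent a b then oriented_unit a b
     else if snd a = fst b then - (oriented_unit a (fst a, snd b) + oriented_unit (fst a, snd b) b)
     else if fst a = snd b then oriented_unit b (fst b, snd a) + oriented_unit (fst b, snd a) a
     else 0)"

lemma vp_adjacent_sym: "vp_adjacent b a \<longleftrightarrow> vp_adjacent a b"
  by (auto simp: vp_adjacent_def)

lemma oriented_unit_swap: "a \<noteq> b \<Longrightarrow> oriented_unit b a = - oriented_unit a b"
  by (auto simp: oriented_unit_def)

lemma vp_bracket_swap:
  assumes "vp_gen n a" "vp_gen n b" "a \<noteq> b"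
  shows "vp_bracket b a = - vp_bracket a b"
proof (cases "vp_adjacent a b")
  case True
  then show ?thesis
    using vp_adjacent_sym[of a b] oriented_unit_swap[OF assms(3)] by (simp add: vp_bracket_def)
next
  case False
  then show ?thesis
    using vp_adjacent_sym[of a b] assms by (cases a, cases b) (auto simp: vp_bracket_def vp_adjacent_def)
qed

lemma vp_bracket_disjoint: "distinct [i, j, k, l] \<Longrightarrow> vp_bracket (i, j) (k, l) = 0"
  by (simp add: vp_bracket_def vp_adjacent_def)

lemma vp_bracket_braid:
  "distinct [i, j, k] \<Longrightarrow> vp_bracket (k, i) (k, j) + vp_bracket (k, i) (i, j) + vp_bracket (k, j) (i, j) = 0"
  by (simp add: vp_bracket_def vp_adjacent_def)

lemma vp_bracket_basis: "(a, b) \<in> vp_basis n \<Longrightarrow> vp_bracket a b = indicator {(a, b)}"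
  by (simp add: vp_basis_def vp_bracket_def oriented_unit_def)

lemma finite_vp_gen: "finite {a. vp_gen n a}"
  by (rule finite_subset[of _ "{1..n} \<times> {1..n}"]) (auto simp: vp_gen_def)

definition vp_form ::
  "nat \<Rightarrow> (nat \<times> nat \<Rightarrow> int) \<Rightarrow> (nat \<times> nat \<Rightarrow> int) \<Rightarrow> (nat \<times> nat) \<times> (nat \<times> nat) \<Rightarrow> int"
  where
  "vp_form n = triangular_form {a. vp_gen n a} vp_bracket"

lemma biadditive_vp_form: "biadditive (vp_form n)"
  by (simp add: vp_form_def biadditive_triangular_form)

lemma vp_form_antisym:
  "vp_gen n a \<Longrightarrow> vp_gen n b \<Longrightarrow> a \<noteq> b \<Longrightarrow>
   vp_form n (indicator {a}) (indicator {b}) - vp_form n (indicator {b}) (indicator {a}) = vp_bracket a b"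
  unfolding vp_form_def by (intro triangular_form_indicator_antisym finite_vp_gen vp_bracket_swap) auto

definition vp_coordinates ::
  "nat \<Rightarrow> vp_letter list set \<Rightarrow> (nat \<times> nat \<Rightarrow> int) \<times> ((nat \<times> nat) \<times> (nat \<times> nat) \<Rightarrow> int)"
  where
  "vp_coordinates n = VP_lift (heisenberg_group (vp_form n)) (\<lambda>a. (indicator {a}, 0))"

lemma vp_coordinates_hom: "vp_coordinates n \<in> hom (VP n) (heisenberg_group (vp_form n))"
  and vp_coordinates_lambda: "vp_gen n a \<Longrightarrow> vp_coordinates n (vp_lambda n a) = (indicator {a}, 0)"
proof -
  interpret biadditive "vp_form n" by (rule biadditive_vp_form)
  interpret heisenberg: group "heisenberg_group (vp_form n)" by (rule group_heisenberg_group)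
  have gen: "vp_gen n (a, b)" if "a \<noteq> b" "{a, b} \<subseteq> {1..n}" for a b
    using that by (simp add: vp_gen_def)
  have "\<forall>r. vp_relator n r \<longrightarrow> word_eval (heisenberg_group (vp_form n)) (\<lambda>a. (indicator {a}, 0)) r = (0, 0)"
    using heisenberg.word_eval_vp_relators_iff[of n "\<lambda>a. (indicator {a}, 0)"]
    by (auto simp del: mult_heisenberg_group simp: heisenberg_group_commute_iff heisenberg_group_braid_iff
        vp_form_antisym gen vp_bracket_disjoint vp_bracket_braid)
  then show "vp_coordinates n \<in> hom (VP n) (heisenberg_group (vp_form n))"
    and "vp_gen n a \<Longrightarrow> vp_coordinates n (vp_lambda n a) = (indicator {a}, 0)"
    unfolding vp_coordinates_def
    by (simp_all add: VP_lift_hom VP_lift_lambda heisenberg.is_group)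
qed

lemma vp_coordinates_commutator:
  assumes "vp_gen n a" "vp_gen n b" "a \<noteq> b"
  shows "vp_coordinates n (commutator (VP n) (vp_lambda n a) (vp_lambda n b)) = (0, vp_bracket a b)"
proof -
  interpret biadditive "vp_form n" by (rule biadditive_vp_form)
  interpret group_hom "VP n" "heisenberg_group (vp_form n)" "vp_coordinates n"
    by (simp add: group_hom_def group_hom_axioms_def group_VP group_heisenberg_group vp_coordinates_hom)
  show ?thesis
    using assms
    by (simp add: hom_commutator vp_lambda_in_carrier vp_coordinates_lambda commutator_heisenberg_group
        vp_form_antisym)
qed

lemma finite_vp_basis: "finite (vp_basis n)"
  by (rule finite_subset[of _ "{a. vp_gen n a} \<times> {a. vp_gen n a}"]) (auto simp: vp_basis_def finite_vp_gen)

context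
  fixes K n
  assumes K: "K \<lhd> VP n"
    and basis: "\<And>a b. (a, b) \<in> vp_basis n \<Longrightarrow> commutator (VP n) (vp_lambda n a) (vp_lambda n b) \<in> K"
begin

interpretation group "VP n" by (rule group_VP)
interpretation K: subgroup K "VP n" using K by (rule normal_imp_subgroup)

lemma vp_adjacent_commutator_in_normal:
  assumes x: "vp_gen n x" and y: "vp_gen n y" and xy: "vp_adjacent x y"
  shows "commutator (VP n) (vp_lambda n x) (vp_lambda n y) \<in> K"
proof (cases x y rule: linorder_cases)
  case less
  then show ?thesis using basis x y xy by (simp add: vp_basis_def)
next
  case equal
  then show ?thesis
    using x commutator_eq_one_iff[of "vp_lambda n x" "vp_lambda n x"] K.one_closed
    by (simp add: vp_lambda_in_carrier)
next
  case greater
  then have "(y, x) \<in> vp_basis n"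
    using x y xy vp_adjacent_sym[of x y] by (simp add: vp_basis_def)
  then have "commutator (VP n) (vp_lambda n y) (vp_lambda n x) \<in> K"
    by (rule basis)
  then show ?thesis
    using x y commutator_swap[of "vp_lambda n y" "vp_lambda n x"] K.m_inv_closed
    by (simp add: vp_lambda_in_carrier)
qed

lemma vp_path_commutator_in_normal:
  assumes ijk: "distinct [i, j, k]" "{i, j, k} \<subseteq> {1..n}"
  shows "commutator (VP n) (vp_lambda n (i, j)) (vp_lambda n (j, k)) \<in> K"
proof -
  have gen: "vp_gen n (i, j)" "vp_gen n (i, k)" "vp_gen n (j, k)"
    using ijk by (auto simp: vp_gen_def)
  note carrier = gen[THEN vp_lambda_in_carrier]
  have "vp_lambda n (i, j) \<otimes>\<^bsub>VP n\<^esub> vp_lambda n (i, k) \<otimes>\<^bsub>VP n\<^esub> vp_lambda n (j, k) =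
      vp_lambda n (j, k) \<otimes>\<^bsub>VP n\<^esub> vp_lambda n (i, k) \<otimes>\<^bsub>VP n\<^esub> vp_lambda n (i, j)"
    using ijk by (intro vp_lambda_braid) auto
  moreover have "commutator (VP n) (vp_lambda n (i, j)) (vp_lambda n (i, k)) \<in> K"
    using gen by (intro vp_adjacent_commutator_in_normal) (auto simp: vp_adjacent_def)
  moreover have "commutator (VP n) (vp_lambda n (i, k)) (vp_lambda n (j, k)) \<in> K"
    using gen by (intro vp_adjacent_commutator_in_normal) (auto simp: vp_adjacent_def)
  ultimately show ?thesis
    by (rule commutator_in_normal_of_braid[OF K carrier])
qed

lemma vp_lambda_commutator_in_normal:
  assumes a: "vp_gen n a" and b: "vp_gen n b"
  shows "commutator (VP n) (vp_lambda n a) (vp_lambda n b) \<in> K"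
proof -
  obtain a1 a2 b1 b2 where ab: "a = (a1, a2)" "b = (b1, b2)" by (cases a, cases b)
  have range: "a1 \<noteq> a2" "b1 \<noteq> b2" "{a1, a2, b1, b2} \<subseteq> {1..n}"
    using a b ab by (auto simp: vp_gen_def)
  consider "vp_adjacent a b" | "a2 = b1" "a1 \<noteq> b2" | "a1 = b2" "a2 \<noteq> b1" | "distinct [a1, a2, b1, b2]"
    using range ab by (auto simp: vp_adjacent_def)
  then show ?thesis
  proof cases
    case 1
    then show ?thesis using a b by (rule vp_adjacent_commutator_in_normal[rotated 2])
  next
    case 2
    then show ?thesis using range ab vp_path_commutator_in_normal[of a1 a2 b2] by auto
  next
    case 3
    then have "commutator (VP n) (vp_lambda n b) (vp_lambda n a) \<in> K"
      using range ab vp_path_commutator_in_normal[of b1 b2 a2] by auto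
    then show ?thesis
      using a b commutator_swap[of "vp_lambda n b" "vp_lambda n a"] K.m_inv_closed
      by (simp add: vp_lambda_in_carrier)
  next
    case 4
    then have "vp_lambda n a \<otimes>\<^bsub>VP n\<^esub> vp_lambda n b = vp_lambda n b \<otimes>\<^bsub>VP n\<^esub> vp_lambda n a"
      using range ab by (simp add: vp_lambda_commute)
    then have "commutator (VP n) (vp_lambda n a) (vp_lambda n b) = \<one>\<^bsub>VP n\<^esub>"
      using a b by (simp add: commutator_eq_one_iff vp_lambda_in_carrier)
    then show ?thesis using K.one_closed by simp
  qed
qed

end

lemma card_vp_gen: "card {a. vp_gen n a} = n * (n - 1)"
proof -
  have "{a. vp_gen n a} = Sigma {1..n} (\<lambda>i. {1..n} - {i})"
    by (auto simp: vp_gen_def)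
  then show ?thesis by (simp add: card_SigmaI)
qed

lemma card_vp_neighbours:
  assumes "vp_gen n a"
  shows "card {b. vp_gen n b \<and> b \<noteq> a \<and> vp_adjacent a b} = 2 * n - 3"
proof -
  obtain i j where a: "a = (i, j)" "i \<noteq> j" "i \<in> {1..n}" "j \<in> {1..n}"
    using assms by (cases a) (auto simp: vp_gen_def)
  let ?R = "{1..n} - {i, j}"
  have "2 \<le> n" using a by (cases "i < j") auto
  have "{b. vp_gen n b \<and> b \<noteq> a \<and> vp_adjacent a b} = Pair i ` ?R \<union> (\<lambda>k. (k, j)) ` ?R \<union> {(j, i)}"
    using a by (auto simp: vp_gen_def vp_adjacent_def)
  also have "card \<dots> = (n - 2) + (n - 2) + 1"
    using a by (subst card_Un_disjoint; auto simp: card_image inj_on_def)+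
  also have "\<dots> = 2 * n - 3"
    using \<open>2 \<le> n\<close> by arith
  finally show ?thesis .
qed

lemma card_vp_basis: "card (vp_basis n) = n * (n - 1) * (2 * n - 3) div 2"
proof -
  define P where "P = {(a, b). vp_gen n a \<and> vp_gen n b \<and> a \<noteq> b \<and> vp_adjacent a b}"
  have "P = vp_basis n \<union> prod.swap ` vp_basis n"
    by (auto simp: P_def vp_basis_def vp_adjacent_def image_iff neq_iff)
  moreover have "vp_basis n \<inter> prod.swap ` vp_basis n = {}"
    by (auto simp: vp_basis_def)
  ultimately have "card P = 2 * card (vp_basis n)"
    using finite_vp_basis by (simp add: card_Un_disjoint card_image)
  moreover have "card P = n * (n - 1) * (2 * n - 3)"
  proof -
    have "P = Sigma {a. vp_gen n a} (\<lambda>a. {b. vp_gen n b \<and> b \<noteq> a \<and> vp_adjacent a b})"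
      by (auto simp: P_def)
    then show ?thesis
      by (simp add: card_SigmaI finite_vp_gen card_vp_neighbours card_vp_gen)
  qed
  ultimately show ?thesis by simp
qed

lemma VP_lower_central_quotient_iso:
  "(VP n)\<lparr>carrier := lower_central (VP n) 2\<rparr> Mod lower_central (VP n) 3
     \<cong> free_Abelian_group (vp_basis n)"
proof -
  interpret group "VP n" by (rule group_VP)
  define c where "c = (\<lambda>(a, b). commutator (VP n) (vp_lambda n a) (vp_lambda n b))"
  define \<theta> where "\<theta> x = frag_on (vp_basis n) (snd (vp_coordinates n x))" for x
  have basis: "vp_gen n a" "vp_gen n b" "a \<noteq> b" if "(a, b) \<in> vp_basis n" for a b
    using that by (auto simp: vp_basis_def)
  show ?thesis
  proof (rule lower_central_quotient_iso_free_Abelian_group[OF VP_generated])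
    show "\<theta> \<in> hom ((VP n)\<lparr>carrier := lower_central (VP n) 2\<rparr>) (free_Abelian_group (vp_basis n))"
      and "\<And>x. x \<in> lower_central (VP n) 3 \<Longrightarrow> \<theta> x = 0"
      unfolding \<theta>_def using heisenberg_coordinates_hom[OF biadditive_vp_form vp_coordinates_hom] by auto
    show "c ` vp_basis n \<subseteq> lower_central (VP n) 2"
      using basis by (auto simp: c_def vp_lambda_in_carrier intro: commutator_in_lower_central_2)
    show "\<theta> (c i) = frag_of i" if "i \<in> vp_basis n" for i
    proof -
      obtain a b where "i = (a, b)" by (cases i)
      then show ?thesis
        using that basis[of a b]
        by (simp add: c_def \<theta>_def vp_coordinates_commutator vp_bracket_basis frag_on_indicator
            finite_vp_basis)
    qed
    show "commutator (VP n) x y \<in> K"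
      if K: "K \<lhd> VP n" and cK: "c ` vp_basis n \<subseteq> K"
        and "x \<in> vp_lambda n ` {a. vp_gen n a}" "y \<in> vp_lambda n ` {a. vp_gen n a}" for K x y
    proof -
      have "commutator (VP n) (vp_lambda n a) (vp_lambda n b) \<in> K" if "(a, b) \<in> vp_basis n" for a b
        using that cK by (force simp: c_def)
      with that(3,4) show ?thesis
        using vp_lambda_commutator_in_normal[OF K] by blast
    qed
  qed
qed

theorem proposition5p7:
  fixes n :: nat
  assumes "n \<ge> 3"
  shows "((VP n)\<lparr>carrier := lower_central (VP n) 2\<rparr> Mod lower_central (VP n) 3)
           \<cong> free_Abelian_group {..< n * (n - 1) * (2 * n - 3) div 2}"
proof -
  \<comment> \<open>The argument works for every \<open>n\<close>.\<close>
  have "vp_basis n \<approx> {..< n * (n - 1) * (2 * n - 3) div 2}"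
    by (simp add: eqpoll_iff_finite_card finite_vp_basis card_vp_basis)
  then have "free_Abelian_group (vp_basis n) \<cong> free_Abelian_group {..< n * (n - 1) * (2 * n - 3) div 2}"
    by (simp add: isomorphic_free_Abelian_groups)
  with VP_lower_central_quotient_iso show ?thesis by (rule iso_trans)
qed

end
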